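(* Let $f:[0,1]\to\mathbb R$, $f(x)=x\log^2 x$ (with $f(0)=0$), and $\varphi(x)=\sqrt{x(1-x)}$. Then the second-order Ditzian–Totik modulus of smoothness satisfies $\omega^2_\varphi(f,t)=\mathcal O\big(t^2\log(1/t)\big)$ as $t\to0^+$.
   Context: For a continuous $f:[0,1]\to\mathbb R$ and $t>0$, $\omega^2_\varphi(f,t)=\sup\big\{|f(u)+f(v)-2f(\tfrac{u+v}{2})| : (u,v)\in[0,1]^2,\ |u-v|\le 2t\,\varphi(\tfrac{u+v}{2})\big\}$. *)

theory Defs
  imports "HOL-Analysis.Analysis" "HOL-Library.Landau_Symbols"
begin

definition dt_modulus2 :: "(real \<Rightarrow> real) \<Rightarrow> (real \<Rightarrow> real) \<Rightarrow> real \<Rightarrow> real" where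
  "dt_modulus2 f \<phi> t = Sup {\<bar>f u + f v - 2 * f ((u + v) / 2)\<bar> | u v.
      u \<in> {0..1} \<and> v \<in> {0..1} \<and> \<bar>u - v\<bar> \<le> 2 * t * \<phi> ((u + v) / 2)}"

end

theory Submission
  imports Defs "HOL-Real_Asymp.Real_Asymp"
begin

text \<open>
  Write the admissible pair as \<open>m - h, m + h\<close> with \<open>0 \<le> h = r m \<le> m\<close>. Homogeneity of
  \<open>g(x) = x ln\<^sup>2 x\<close> gives the exact second difference
  \<open>m (2 ln m \<cdot> D\<^sub>1(r) + D\<^sub>2(r))\<close>, where \<open>D\<^sub>1, D\<^sub>2\<close> are symmetric sums of
  \<open>x ln x\<close> and \<open>x ln\<^sup>2 x\<close> at \<open>1 \<plusminus> r\<close>, both of order \<open>r\<^sup>2\<close>. Hence the second difference is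
  at most \<open>(h\<^sup>2/m)(6 + 4 |ln m|)\<close>. The Ditzian--Totik step condition forces \<open>h\<^sup>2 \<le> t\<^sup>2 m\<close>,
  and \<open>|ln m| \<le> 2 ln(1/t) + t\<^sup>2/m\<close> (from \<open>ln y \<le> y - 1\<close> at \<open>y = t\<^sup>2/m\<close>), which balances
  the logarithmic blow-up near \<open>m = 0\<close> and yields \<open>O(t\<^sup>2 ln(1/t))\<close>.
\<close>

lemma ln_ge_one_minus_inverse: "0 < x \<Longrightarrow> 1 - 1/x \<le> ln (x::real)"
  using ln_le_minus_one[of "1/x"] by (simp add: ln_div)

lemma xlnx_bounds:
  fixes x :: real assumes "0 \<le> x"
  shows "x - 1 \<le> x * ln x" and "x * ln x \<le> x * (x - 1)"
proof -
  show "x * ln x \<le> x * (x - 1)"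
    using ln_le_minus_one[of x] assms by (cases "x = 0") (auto intro: mult_left_mono)
  show "x - 1 \<le> x * ln x"
  proof (cases "x = 0")
    case False
    have "x * (1 - 1/x) \<le> x * ln x"
      using assms ln_ge_one_minus_inverse[of x] False by (intro mult_left_mono) auto
    moreover have "x * (1 - 1/x) = x - 1" using False by (simp add: field_simps)
    ultimately show ?thesis by simp
  qed simp
qed

lemma symmetric_xlnx_sum_bounds:
  fixes r :: real assumes "0 \<le> r" "r \<le> 1"
  shows "0 \<le> (1 - r) * ln (1 - r) + (1 + r) * ln (1 + r)"
    and "(1 - r) * ln (1 - r) + (1 + r) * ln (1 + r) \<le> 2 * r\<^sup>2"
  using xlnx_bounds[of "1 - r"] xlnx_bounds[of "1 + r"] assms
  by (auto simp: power2_eq_square algebra_simps)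

lemma xln_sq_le:
  fixes s :: real assumes "0 \<le> s" "s \<le> 1"
  shows "s * (ln s)\<^sup>2 \<le> 4 * (1 - s)\<^sup>2"
proof (cases "s = 0")
  case False
  then have s: "0 < s" using assms by simp
  have sqrt_s: "0 < sqrt s" "sqrt s \<le> 1" "s \<le> sqrt s"
    using s assms real_le_rsqrt[of s s] by (auto simp: power2_eq_square mult_left_le)
  \<comment> \<open>\<open>ln s = 2 ln \<surd>s \<ge> 2 (1 - 1/\<surd>s)\<close>\<close>
  have "- ln s \<le> 2 * (1/sqrt s - 1)"
    using ln_ge_one_minus_inverse[of "sqrt s"] sqrt_s s by (simp add: ln_sqrt)
  then have "(ln s)\<^sup>2 \<le> (2 * (1/sqrt s - 1))\<^sup>2"
    using power_mono[of "- ln s" _ 2] s assms by simp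
  then have "s * (ln s)\<^sup>2 \<le> s * (2 * (1/sqrt s - 1))\<^sup>2"
    using s by (intro mult_left_mono) auto
  also have "\<dots> = 4 * (1 - sqrt s)\<^sup>2"
    using sqrt_s s by (simp add: power2_eq_square field_simps)
  also have "\<dots> \<le> 4 * (1 - s)\<^sup>2"
    using sqrt_s by (intro mult_left_mono power_mono) auto
  finally show ?thesis .
qed simp

lemma symmetric_xln_sq_sum_bounds:
  fixes r :: real assumes "0 \<le> r" "r \<le> 1"
  shows "0 \<le> (1 - r) * (ln (1 - r))\<^sup>2 + (1 + r) * (ln (1 + r))\<^sup>2"
    and "(1 - r) * (ln (1 - r))\<^sup>2 + (1 + r) * (ln (1 + r))\<^sup>2 \<le> 6 * r\<^sup>2"
proof -
  have "(ln (1 + r))\<^sup>2 \<le> r\<^sup>2"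
    using assms ln_add_one_self_le_self[of r] by (intro power_mono) auto
  then have "(1 + r) * (ln (1 + r))\<^sup>2 \<le> 2 * r\<^sup>2"
    using assms mult_mono[of "1 + r" 2 "(ln (1 + r))\<^sup>2" "r\<^sup>2"] by auto
  moreover have "(1 - r) * (ln (1 - r))\<^sup>2 \<le> 4 * r\<^sup>2"
    using xln_sq_le[of "1 - r"] assms by simp
  ultimately show "(1 - r) * (ln (1 - r))\<^sup>2 + (1 + r) * (ln (1 + r))\<^sup>2 \<le> 6 * r\<^sup>2"
    by simp
  show "0 \<le> (1 - r) * (ln (1 - r))\<^sup>2 + (1 + r) * (ln (1 + r))\<^sup>2"
    using assms by simp
qed

lemma xln_sq_scale:
  fixes m y :: real assumes "0 < m" "0 \<le> y"
  shows "(m * y) * (ln (m * y))\<^sup>2 = m * (y * (ln m + ln y)\<^sup>2)"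
  using assms by (cases "y = 0") (auto simp: ln_mult)

lemma xln_sq_second_difference_eq:
  fixes m r :: real assumes "0 < m" "0 \<le> r" "r \<le> 1"
  shows "(m * (1 - r)) * (ln (m * (1 - r)))\<^sup>2 + (m * (1 + r)) * (ln (m * (1 + r)))\<^sup>2
           - 2 * (m * (ln m)\<^sup>2)
         = m * (2 * ln m * ((1 - r) * ln (1 - r) + (1 + r) * ln (1 + r))
                + ((1 - r) * (ln (1 - r))\<^sup>2 + (1 + r) * (ln (1 + r))\<^sup>2))"
proof -
  have "(m * (1 - r)) * (ln (m * (1 - r)))\<^sup>2 = m * ((1 - r) * (ln m + ln (1 - r))\<^sup>2)"
    "(m * (1 + r)) * (ln (m * (1 + r)))\<^sup>2 = m * ((1 + r) * (ln m + ln (1 + r))\<^sup>2)"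
    using assms by (simp_all only: xln_sq_scale)
  then show ?thesis by (simp add: power2_eq_square algebra_simps)
qed

lemma xln_sq_second_difference_abs_le:
  fixes m r :: real assumes "0 < m" "m \<le> 1" "0 \<le> r" "r \<le> 1"
  shows "\<bar>(m * (1 - r)) * (ln (m * (1 - r)))\<^sup>2 + (m * (1 + r)) * (ln (m * (1 + r)))\<^sup>2
           - 2 * (m * (ln m)\<^sup>2)\<bar> \<le> m * r\<^sup>2 * (6 - 4 * ln m)"
proof -
  define D\<^sub>1 where "D\<^sub>1 = (1 - r) * ln (1 - r) + (1 + r) * ln (1 + r)"
  define D\<^sub>2 where "D\<^sub>2 = (1 - r) * (ln (1 - r))\<^sup>2 + (1 + r) * (ln (1 + r))\<^sup>2"
  have D\<^sub>1: "0 \<le> D\<^sub>1" "D\<^sub>1 \<le> 2 * r\<^sup>2"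
    unfolding D\<^sub>1_def using symmetric_xlnx_sum_bounds assms(3,4) by auto
  have D\<^sub>2: "0 \<le> D\<^sub>2" "D\<^sub>2 \<le> 6 * r\<^sup>2"
    unfolding D\<^sub>2_def using symmetric_xln_sq_sum_bounds assms(3,4) by auto
  have ln_m: "ln m \<le> 0" using assms by simp
  have "ln m * (2 * r\<^sup>2) \<le> ln m * D\<^sub>1" "ln m * D\<^sub>1 \<le> 0"
    using ln_m D\<^sub>1 by (auto intro: mult_left_mono_neg mult_nonpos_nonneg)
  then have "\<bar>2 * ln m * D\<^sub>1 + D\<^sub>2\<bar> \<le> r\<^sup>2 * (6 - 4 * ln m)"
    using D\<^sub>2 by (simp add: abs_le_iff algebra_simps)
  then show ?thesis
    using xln_sq_second_difference_eq[OF assms(1,3,4)] assms(1)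
    by (simp add: D\<^sub>1_def D\<^sub>2_def abs_mult mult.assoc)
qed

lemma xln_sq_second_difference_le:
  fixes m h t :: real
  assumes "0 \<le> h" "h \<le> m" "m \<le> 1" "0 < t" "1 \<le> ln (1/t)" "h\<^sup>2 \<le> t\<^sup>2 * m"
  shows "\<bar>(m - h) * (ln (m - h))\<^sup>2 + (m + h) * (ln (m + h))\<^sup>2 - 2 * (m * (ln m)\<^sup>2)\<bar>
           \<le> 18 * (t\<^sup>2 * ln (1/t))"
proof (cases "m = 0")
  case True
  then show ?thesis using assms by (auto intro: mult_nonneg_nonneg order_trans[OF zero_le_one])
next
  case False
  then have m: "0 < m" using assms by simp
  define r where "r = h / m"
  have r: "0 \<le> r" "r \<le> 1" "m * r = h" using assms m by (auto simp: r_def)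
  have "- ln m \<le> 2 * ln (1/t) + t\<^sup>2 / m"
    using ln_le_minus_one[of "t\<^sup>2 / m"] assms m by (simp add: ln_div ln_realpow)
  then have "m * r\<^sup>2 * (6 - 4 * ln m) \<le> m * r\<^sup>2 * (6 + 8 * ln (1/t) + 4 * t\<^sup>2 / m)"
    using m by (intro mult_left_mono) auto
  also have "\<dots> = (h\<^sup>2 / m) * (6 + 8 * ln (1/t)) + 4 * t\<^sup>2 * r\<^sup>2"
    using m r by (auto simp: power2_eq_square field_simps)
  also have "\<dots> \<le> t\<^sup>2 * (6 + 8 * ln (1/t)) + 4 * t\<^sup>2 * 1"
    using assms m r power_mono[of r 1 2]
    by (intro add_mono mult_right_mono mult_left_mono) (auto simp: field_simps)
  also have "\<dots> \<le> 18 * (t\<^sup>2 * ln (1/t))"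
  proof -
    have "t\<^sup>2 * 1 \<le> t\<^sup>2 * ln (1/t)" using assms by (intro mult_left_mono) auto
    then show ?thesis by (simp add: algebra_simps)
  qed
  finally show ?thesis
    using xln_sq_second_difference_abs_le[of m r] m r assms
    by (simp add: right_diff_distrib distrib_left)
qed

lemma dt_modulus2_abs_le:
  assumes "0 \<le> t" "0 \<le> \<phi> 0"
    and "\<And>u v. u \<in> {0..1} \<Longrightarrow> v \<in> {0..1} \<Longrightarrow> \<bar>u - v\<bar> \<le> 2 * t * \<phi> ((u + v) / 2) \<Longrightarrow>
           \<bar>f u + f v - 2 * f ((u + v) / 2)\<bar> \<le> B"
  shows "\<bar>dt_modulus2 f \<phi> t\<bar> \<le> B"
proof -
  define S where "S = {\<bar>f u + f v - 2 * f ((u + v) / 2)\<bar> | u v.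
      u \<in> {0..1} \<and> v \<in> {0..1} \<and> \<bar>u - v\<bar> \<le> 2 * t * \<phi> ((u + v) / 2)}"
  have bound: "y \<le> B" if "y \<in> S" for y
    using that assms(3) unfolding S_def by blast
  have "0 \<in> S" unfolding S_def using assms(1,2) by force
  moreover have "bdd_above S" using bound by (rule bdd_aboveI)
  ultimately have "0 \<le> Sup S" "Sup S \<le> B"
    using bound by (auto intro: cSup_upper cSup_least)
  then show ?thesis by (simp add: dt_modulus2_def S_def)
qed

lemma dt_modulus2_xln_sq_le:
  fixes t :: real
  assumes "0 < t" "1 \<le> ln (1/t)"
  shows "\<bar>dt_modulus2 (\<lambda>x. x * (ln x)\<^sup>2) (\<lambda>x. sqrt (x * (1 - x))) t\<bar> \<le> 18 * (t\<^sup>2 * ln (1/t))"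
proof (rule dt_modulus2_abs_le)
  fix u v :: real
  assume u: "u \<in> {0..1}" and v: "v \<in> {0..1}"
    and step: "\<bar>u - v\<bar> \<le> 2 * t * sqrt ((u + v) / 2 * (1 - (u + v) / 2))"
  define m where "m = (u + v) / 2"
  define h where "h = \<bar>u - v\<bar> / 2"
  have m: "0 \<le> m" "m \<le> 1" "0 \<le> h" "h \<le> m" using u v by (auto simp: m_def h_def)
  have "h \<le> t * sqrt (m * (1 - m))" using step by (simp add: m_def h_def)
  then have "h\<^sup>2 \<le> (t * sqrt (m * (1 - m)))\<^sup>2"
    using m by (intro power_mono) auto
  also have "\<dots> = t\<^sup>2 * (m * (1 - m))"
    using m by (simp add: power_mult_distrib)
  also have "\<dots> \<le> t\<^sup>2 * m" using m by (intro mult_left_mono) (auto simp: mult_left_le)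
  finally have "h\<^sup>2 \<le> t\<^sup>2 * m" .
  moreover have "u * (ln u)\<^sup>2 + v * (ln v)\<^sup>2 = (m - h) * (ln (m - h))\<^sup>2 + (m + h) * (ln (m + h))\<^sup>2"
    by (cases "u \<le> v") (auto simp: m_def h_def field_simps)
  ultimately show "\<bar>u * (ln u)\<^sup>2 + v * (ln v)\<^sup>2 - 2 * ((u + v) / 2 * (ln ((u + v) / 2))\<^sup>2)\<bar>
      \<le> 18 * (t\<^sup>2 * ln (1/t))"
    using xln_sq_second_difference_le[of h m t] m assms by (simp add: m_def)
qed (use assms in auto)

theorem mainTheorem8:
  fixes f \<phi> :: "real \<Rightarrow> real"
  assumes "\<And>x. f x = (if x = 0 then 0 else x * (ln x)\<^sup>2)"
      and "\<And>x. \<phi> x = sqrt (x * (1 - x))"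
  shows "(\<lambda>t. dt_modulus2 f \<phi> t) \<in> O[at_right 0](\<lambda>t. t\<^sup>2 * ln (1 / t))"
proof (rule bigoI[where c = 18])
  \<comment> \<open>The case split in \<open>f\<close> is vacuous, since \<open>ln 0 = 0\<close> in HOL.\<close>
  have "f = (\<lambda>x. x * (ln x)\<^sup>2)" "\<phi> = (\<lambda>x. sqrt (x * (1 - x)))"
    using assms by auto
  moreover have "eventually (\<lambda>t::real. 0 < t \<and> 1 \<le> ln (1/t)) (at_right 0)"
    by (intro eventually_conj eventually_at_right_less) real_asymp
  ultimately show "\<forall>\<^sub>F t in at_right 0. norm (dt_modulus2 f \<phi> t) \<le> 18 * norm (t\<^sup>2 * ln (1 / t))"
    by (auto elim!: eventually_mono dest: dt_modulus2_xln_sq_le)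
qed

end
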